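(* Let $p$ be a prime, and let $K=\{k_1<k_2<\cdots<k_r\}$ and $L=\{l_1,\ldots,l_s\}$ be disjoint subsets of $\{0,1,\ldots,p-1\}$. Let $\mathcal{A}=\{A_1,\ldots,A_m\}$ be a family of distinct subsets of $[n]$ with $|A_i|\pmod p\in K$ for all $i$ and $|A_i\cap A_j|\pmod p\in L$ for all $i\neq j$. Suppose $n\ge s+k_r$, and suppose that either $n<p+k_1$ or $(s-2r+1)+k_r<p+k_1-1$. Consider, as functions $\{0,1\}^n\to\mathbb{F}_p$, the polynomials \begin{itemize} \item $f_{A_j}(x)=\prod_{i=1}^{s}(v_{A_j}\cdot x-l_i)$ for $1\le j\le m$; \item $q_S(x)=(1-x_n)\prod_{i\in S}x_i$ for every $S\subseteq[n-1]$ with $|S|\le s-1$; \item $g_I(x)=g(x)\prod_{i\in I}x_i$ for every $I\subseteq[n-1]$ with $|I|\le s-2r$, where $g(x)=\prod_{h\in K\cup(K-1)}\big(x_1+\cdots+x_{n-1}-h\big)$ and $K-1=\{k-1:k\in K\}$. \end{itemize} Then these polynomials are linearly independent over $\mathbb{F}_p$. Consequently \[ |\mathcal{A}|\le \binom{n-1}{s}+\binom{n-1}{s-1}+\cdots+\binom{n-1}{s-2r+1}. \]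
   Context: $x=(x_1,\ldots,x_n)$ with each $x_i\in\{0,1\}$; for $A\subseteq[n]$, $v_A\in\{0,1\}^n$ is the incidence vector of $A$ ($i$-th coordinate $1$ iff $i\in A$), and $v_A\cdot x=\sum_{i\in A}x_i$. If $s-2r<0$ the third family is empty. Binomial coefficients with negative lower index are $0$. *)

theory Defs
  imports "HOL-Computational_Algebra.Primes"
begin

(* A point x in {0,1}^n is represented by its support X \<subseteq> {1..n};
   x_i = xv X i. *)
definition xv :: "nat set \<Rightarrow> nat \<Rightarrow> int" where
  "xv X i = (if i \<in> X then 1 else 0)"

definition dotv :: "nat set \<Rightarrow> nat set \<Rightarrow> int" where
  "dotv A X = (\<Sum>i\<in>A. xv X i)"

definition fpoly :: "nat set \<Rightarrow> nat set \<Rightarrow> nat set \<Rightarrow> int" where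
  "fpoly L A X = (\<Prod>l\<in>L. dotv A X - int l)"

definition qpoly :: "nat \<Rightarrow> nat set \<Rightarrow> nat set \<Rightarrow> int" where
  "qpoly n S X = (1 - xv X n) * (\<Prod>i\<in>S. xv X i)"

(* g(x) = prod_{h in K \<union> (K-1)} (x_1 + ... + x_{n-1} - h), the set K \<union> (K-1)
   taken as a set of elements of F_p (residues mod p) *)
definition gpoly :: "nat \<Rightarrow> nat \<Rightarrow> nat set \<Rightarrow> nat set \<Rightarrow> int" where
  "gpoly p n K X = (\<Prod>h\<in>((\<lambda>h. h mod int p) ` (int ` K \<union> (\<lambda>k. int k - 1) ` K)).
                     (\<Sum>i\<in>{1..n-1}. xv X i) - h)"

definition gIpoly :: "nat \<Rightarrow> nat \<Rightarrow> nat set \<Rightarrow> nat set \<Rightarrow> nat set \<Rightarrow> int" where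
  "gIpoly p n K I X = gpoly p n K X * (\<Prod>i\<in>I. xv X i)"

(* Linear independence over F_p of the family (F i)_{i \<in> Idx} of functions D \<rightarrow> F_p,
   with F_p-values represented by integers modulo p. *)
definition lin_indep_mod :: "nat \<Rightarrow> 'i set \<Rightarrow> ('i \<Rightarrow> 'x \<Rightarrow> int) \<Rightarrow> 'x set \<Rightarrow> bool" where
  "lin_indep_mod p Idx F D \<longleftrightarrow>
     (\<forall>c. (\<forall>x\<in>D. (\<Sum>i\<in>Idx. c i * F i x) mod int p = 0) \<longrightarrow> (\<forall>i\<in>Idx. c i mod int p = 0))"

definition allpolys :: "nat \<Rightarrow> nat \<Rightarrow> nat set \<Rightarrow> nat set \<Rightarrow>
    (nat set + nat set + nat set) \<Rightarrow> nat set \<Rightarrow> int" where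
  "allpolys p n K L idx = (case idx of
       Inl A \<Rightarrow> fpoly L A
     | Inr (Inl S) \<Rightarrow> qpoly n S
     | Inr (Inr I) \<Rightarrow> gIpoly p n K I)"

end

theory Submission
  imports Defs "HOL-Library.FuncSet"
begin

(* Suppose a combination of the functions vanishes mod p on {0,1}^n. At a point A \<in> \<A> every g_I
   vanishes (there x_1 + ... + x_(n-1) is |A| or |A| - 1, and |A| mod p \<in> K) and every f_B with
   B \<noteq> A vanishes, while f_A does not; if moreover n \<in> A, all q_S vanish, so the coefficient of f_A
   is 0. Comparing the points S and S \<union> {n} then isolates the down-sums of the q-coefficients,
   which vanish by Moebius inversion, and hence all f-coefficients vanish. What remains is g times
   a multilinear polynomial in x_1, ..., x_(n-1) of degree at most s - 2r; g does not vanish at points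
   whose weight lies strictly between max K and p + min K - 1, and the hypotheses on n provide enough
   such points for Moebius inversion to kill the remaining coefficients. All the functions are
   multilinear of degree at most s, so there are at most as many of them as monomials of degree at
   most s in n variables, which gives the bound on |\<A>|. *)

lemma prod_xv: "finite S \<Longrightarrow> (\<Prod>i\<in>S. xv X i) = (if S \<subseteq> X then 1 else 0)"
  by (induction S rule: finite_induct) (auto simp: xv_def)

lemma sum_xv: "finite A \<Longrightarrow> (\<Sum>i\<in>A. xv X i) = int (card (A \<inter> X))"
  unfolding xv_def by (simp add: sum.If_cases)

lemma dvd_diff_nat_iff_mod_eq:
  assumes "l < p" shows "int p dvd int a - int l \<longleftrightarrow> a mod p = l"
proof -
  have "int p dvd int a - int l \<longleftrightarrow> int (a mod p) = int (l mod p)"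
    by (simp add: mod_eq_dvd_iff[symmetric] zmod_int)
  then show ?thesis using assms by simp
qed

section \<open>Multilinear functions on the cube\<close>

definition monomials :: "nat \<Rightarrow> nat \<Rightarrow> nat set set" where
  "monomials n d = {T. T \<subseteq> {1..n} \<and> card T \<le> d}"

(* On the point with support X the monomial \<Prod>i\<in>T. x\<^sub>i takes the value [T \<subseteq> X]; so low_degree n d F
   says that F agrees on {0,1}^n with an integer multilinear polynomial of degree at most d. *)
definition low_degree :: "nat \<Rightarrow> nat \<Rightarrow> (nat set \<Rightarrow> int) \<Rightarrow> bool" where
  "low_degree n d F \<longleftrightarrow>
     (\<exists>b. \<forall>X. X \<subseteq> {1..n} \<longrightarrow> F X = (\<Sum>T\<in>monomials n d. b T * (if T \<subseteq> X then 1 else 0)))"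

lemma finite_monomials: "finite (monomials n d)"
  by (rule finite_subset[of _ "Pow {1..n}"]) (auto simp: monomials_def)

lemma low_degree_mono:
  assumes "low_degree n d F" "d \<le> e" shows "low_degree n e F"
proof -
  obtain b where b: "\<And>X. X \<subseteq> {1..n} \<Longrightarrow> F X = (\<Sum>T\<in>monomials n d. b T * (if T \<subseteq> X then 1 else 0))"
    using assms(1) unfolding low_degree_def by blast
  have sub: "monomials n d \<subseteq> monomials n e" using assms(2) by (auto simp: monomials_def)
  define b' where "b' T = (if T \<in> monomials n d then b T else 0)" for T
  have "F X = (\<Sum>T\<in>monomials n e. b' T * (if T \<subseteq> X then 1 else 0))" if "X \<subseteq> {1..n}" for X
    using b[OF that] by (simp add: b'_def sum.mono_neutral_right[OF finite_monomials sub])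
  then show ?thesis unfolding low_degree_def by blast
qed

lemma low_degree_monomial:
  assumes "T \<subseteq> {1..n}" shows "low_degree n (card T) (\<lambda>X. if T \<subseteq> X then 1 else 0)"
proof -
  have "T \<in> monomials n (card T)" using assms by (simp add: monomials_def)
  then show ?thesis unfolding low_degree_def
  proof (intro exI[of _ "\<lambda>U. if U = T then 1 else 0"] allI impI)
    fix X
    have "(\<Sum>U\<in>monomials n (card T). (if U = T then 1 else 0) * (if U \<subseteq> X then 1 else 0))
        = (\<Sum>U\<in>monomials n (card T). if U = T then (if T \<subseteq> X then 1 else 0) else (0::int))"
      by (intro sum.cong) auto
    also have "\<dots> = (if T \<subseteq> X then 1 else 0)"
      using \<open>T \<in> monomials n (card T)\<close> by (simp add: finite_monomials)
    finally show "(if T \<subseteq> X then 1 else 0 :: int)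
        = (\<Sum>U\<in>monomials n (card T). (if U = T then 1 else 0) * (if U \<subseteq> X then 1 else 0))"
      by (rule sym)
  qed
qed

lemma low_degree_const: "low_degree n 0 (\<lambda>X. c)"
proof -
  have "monomials n 0 = {{}}" by (auto simp: monomials_def card_eq_0_iff intro: finite_subset)
  then show ?thesis unfolding low_degree_def by (intro exI[of _ "\<lambda>_. c"]) simp
qed

lemma low_degree_add:
  assumes "low_degree n d F" "low_degree n d G" shows "low_degree n d (\<lambda>X. F X + G X)"
proof -
  obtain b where "\<And>X. X \<subseteq> {1..n} \<Longrightarrow> F X = (\<Sum>T\<in>monomials n d. b T * (if T \<subseteq> X then 1 else 0))"
    using assms(1) unfolding low_degree_def by blast
  moreover obtain c where "\<And>X. X \<subseteq> {1..n} \<Longrightarrow> G X = (\<Sum>T\<in>monomials n d. c T * (if T \<subseteq> X then 1 else 0))"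
    using assms(2) unfolding low_degree_def by blast
  ultimately show ?thesis unfolding low_degree_def
    by (intro exI[of _ "\<lambda>T. b T + c T"]) (simp add: distrib_right sum.distrib)
qed

lemma low_degree_scale:
  assumes "low_degree n d F" shows "low_degree n d (\<lambda>X. a * F X)"
proof -
  obtain b where "\<And>X. X \<subseteq> {1..n} \<Longrightarrow> F X = (\<Sum>T\<in>monomials n d. b T * (if T \<subseteq> X then 1 else 0))"
    using assms unfolding low_degree_def by blast
  then show ?thesis unfolding low_degree_def
    by (intro exI[of _ "\<lambda>T. a * b T"]) (simp add: sum_distrib_left mult.assoc)
qed

lemma low_degree_sum:
  assumes "finite A" "\<And>a. a \<in> A \<Longrightarrow> low_degree n d (F a)"
  shows "low_degree n d (\<lambda>X. \<Sum>a\<in>A. F a X)"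
  using assms
proof (induction A rule: finite_induct)
  case empty
  then show ?case using low_degree_mono[OF low_degree_const[of n 0]] by simp
next
  case (insert x A)
  then show ?case by (simp add: low_degree_add)
qed

lemma low_degree_mult:
  assumes "low_degree n d F" "low_degree n e G" shows "low_degree n (d + e) (\<lambda>X. F X * G X)"
proof -
  obtain b where b: "\<And>X. X \<subseteq> {1..n} \<Longrightarrow> F X = (\<Sum>T\<in>monomials n d. b T * (if T \<subseteq> X then 1 else 0))"
    using assms(1) unfolding low_degree_def by blast
  obtain c where c: "\<And>X. X \<subseteq> {1..n} \<Longrightarrow> G X = (\<Sum>U\<in>monomials n e. c U * (if U \<subseteq> X then 1 else 0))"
    using assms(2) unfolding low_degree_def by blast
  define bc where "bc V = (\<Sum>T\<in>monomials n d. \<Sum>U\<in>monomials n e. if T \<union> U = V then b T * c U else 0)" for V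
  have union_mem: "T \<union> U \<in> monomials n (d + e)" if "T \<in> monomials n d" "U \<in> monomials n e" for T U
    using that card_Un_le[of T U] by (auto simp: monomials_def)
  have "F X * G X = (\<Sum>V\<in>monomials n (d + e). bc V * (if V \<subseteq> X then 1 else 0))" if X: "X \<subseteq> {1..n}" for X
  proof -
    have "(\<Sum>V\<in>monomials n (d + e). bc V * (if V \<subseteq> X then 1 else 0))
        = (\<Sum>V\<in>monomials n (d + e). \<Sum>T\<in>monomials n d. \<Sum>U\<in>monomials n e.
             if T \<union> U = V then b T * c U * (if V \<subseteq> X then 1 else 0) else 0)"
      unfolding bc_def sum_distrib_right by (intro sum.cong refl) auto
    also have "\<dots> = (\<Sum>T\<in>monomials n d. \<Sum>U\<in>monomials n e. \<Sum>V\<in>monomials n (d + e).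
             if T \<union> U = V then b T * c U * (if V \<subseteq> X then 1 else 0) else 0)"
      by (subst sum.swap) (subst (2) sum.swap, rule refl)
    also have "\<dots> = (\<Sum>T\<in>monomials n d. \<Sum>U\<in>monomials n e. b T * c U * (if T \<union> U \<subseteq> X then 1 else 0))"
      by (intro sum.cong refl) (simp add: finite_monomials union_mem)
    also have "\<dots> = F X * G X"
      by (simp add: b[OF X] c[OF X] sum_product) (intro sum.cong refl, auto)
    finally show ?thesis by simp
  qed
  then show ?thesis unfolding low_degree_def by blast
qed

lemma low_degree_prod:
  assumes "finite A" "\<And>a. a \<in> A \<Longrightarrow> low_degree n 1 (F a)"
  shows "low_degree n (card A) (\<lambda>X. \<Prod>a\<in>A. F a X)"
  using assms
proof (induction A rule: finite_induct)
  case empty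
  then show ?case using low_degree_const[of n 1] by simp
next
  case (insert x A)
  then show ?case using low_degree_mult[of n 1 "F x"] by simp
qed

lemma low_degree_xv: "i \<in> {1..n} \<Longrightarrow> low_degree n 1 (\<lambda>X. xv X i)"
  using low_degree_monomial[of "{i}" n] by (simp add: xv_def)

lemma low_degree_linear:
  assumes "A \<subseteq> {1..n}" shows "low_degree n 1 (\<lambda>X. (\<Sum>i\<in>A. xv X i) - c)"
proof -
  have "low_degree n 1 (\<lambda>X. \<Sum>i\<in>A. xv X i)"
    using assms by (intro low_degree_sum low_degree_xv) (auto intro: finite_subset)
  moreover have "low_degree n 1 (\<lambda>X. - c)" by (rule low_degree_mono[OF low_degree_const]) simp
  ultimately show ?thesis using low_degree_add by fastforce
qed

lemma card_monomials_le:
  "card (monomials n d) \<le> card (monomials (n - 1) d) + card {T. T \<subseteq> {1..n - 1} \<and> card T < d}"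
proof -
  let ?Q = "{T. T \<subseteq> {1..n - 1} \<and> card T < d}"
  have "monomials n d \<subseteq> monomials (n - 1) d \<union> insert n ` ?Q"
  proof
    fix T assume "T \<in> monomials n d"
    then have T: "T \<subseteq> {1..n}" "card T \<le> d" by (auto simp: monomials_def)
    then have fT: "finite T" and rest: "T - {n} \<subseteq> {1..n - 1}" by (auto intro: finite_subset)
    show "T \<in> monomials (n - 1) d \<union> insert n ` ?Q"
    proof (cases "n \<in> T")
      case True
      then have "T - {n} \<in> ?Q" using rest T(2) fT card_Diff1_less[OF fT True] by auto
      then show ?thesis using True insert_Diff[OF True] by blast
    qed (use T rest in \<open>auto simp: monomials_def\<close>)
  qed
  moreover have "finite ?Q" by (rule finite_subset[of _ "Pow {1..n - 1}"]) auto
  ultimately have "card (monomials n d) \<le> card (monomials (n - 1) d \<union> insert n ` ?Q)"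
    by (intro card_mono) (auto simp: finite_monomials)
  also have "\<dots> \<le> card (monomials (n - 1) d) + card ?Q"
    by (rule order_trans[OF card_Un_le add_left_mono[OF card_image_le[OF \<open>finite ?Q\<close>]]])
  finally show ?thesis .
qed

lemma card_subsets_card_in:
  assumes "finite A" "finite R"
  shows "card {T. T \<subseteq> A \<and> card T \<in> R} = (\<Sum>t\<in>R. card A choose t)"
proof -
  have "{T. T \<subseteq> A \<and> card T \<in> R} = (\<Union>t\<in>R. {T. T \<subseteq> A \<and> card T = t})" by auto
  moreover have "card (\<Union>t\<in>R. {T. T \<subseteq> A \<and> card T = t}) = (\<Sum>t\<in>R. card {T. T \<subseteq> A \<and> card T = t})"
    using assms by (intro card_UN_disjoint) (auto intro: finite_subset[of _ "Pow A"])
  ultimately show ?thesis using assms(1) by (simp add: n_subsets)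
qed

section \<open>Independence mod p and Moebius inversion\<close>

(* The p^|Idx| coefficient vectors with entries in [0, p) give pairwise different functions D \<rightarrow> \<int>/p
   by independence, and all of them lie in the span of the m T, which has at most p^|Ts| elements. *)
lemma lin_indep_mod_card_le:
  fixes F :: "'i \<Rightarrow> 'x \<Rightarrow> int" and m :: "'t \<Rightarrow> 'x \<Rightarrow> int"
  assumes p: "1 < p" and fin: "finite Idx" "finite Ts" and indep: "lin_indep_mod p Idx F D"
    and span: "\<forall>i\<in>Idx. \<exists>b. \<forall>x\<in>D. F i x = (\<Sum>T\<in>Ts. b T * m T x)"
  shows "card Idx \<le> card Ts"
proof -
  obtain B where B: "\<And>i x. i \<in> Idx \<Longrightarrow> x \<in> D \<Longrightarrow> F i x = (\<Sum>T\<in>Ts. B i T * m T x)"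
    using bchoice[OF span] by blast
  define C1 where "C1 = PiE Idx (\<lambda>_. {0..<int p})"
  define C2 where "C2 = PiE Ts (\<lambda>_. {0..<int p})"
  define Phi where "Phi c = (\<lambda>x\<in>D. (\<Sum>i\<in>Idx. c i * F i x) mod int p)" for c
  define Psi where "Psi c = (\<lambda>x\<in>D. (\<Sum>T\<in>Ts. c T * m T x) mod int p)" for c
  have "inj_on Phi C1"
  proof (rule inj_onI)
    fix c c' assume c: "c \<in> C1" and c': "c' \<in> C1" and eq: "Phi c = Phi c'"
    have "(\<Sum>i\<in>Idx. (c i - c' i) * F i x) mod int p = 0" if "x \<in> D" for x
    proof -
      have "(\<Sum>i\<in>Idx. c i * F i x) mod int p = (\<Sum>i\<in>Idx. c' i * F i x) mod int p"
        using fun_cong[OF eq, of x] that by (simp add: Phi_def)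
      then show ?thesis
        by (simp only: left_diff_distrib sum_subtractf mod_eq_dvd_iff dvd_eq_mod_eq_0[symmetric])
    qed
    then have "(c i - c' i) mod int p = 0" if "i \<in> Idx" for i
      using indep[unfolded lin_indep_mod_def, rule_format, of "\<lambda>i. c i - c' i"] that by blast
    moreover have "c i mod int p = c i" "c' i mod int p = c' i" if "i \<in> Idx" for i
      using c c' that by (auto simp: C1_def PiE_iff intro!: mod_pos_pos_trivial)
    ultimately have "c i = c' i" if "i \<in> Idx" for i
      using that mod_eq_dvd_iff[of "c i" "int p" "c' i"] dvd_eq_mod_eq_0[of "int p" "c i - c' i"] by simp
    then show "c = c'"
      using c c' by (auto simp: C1_def intro: PiE_ext)
  qed
  moreover have "Phi ` C1 \<subseteq> Psi ` C2"
  proof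
    fix y assume "y \<in> Phi ` C1"
    then obtain c where y: "y = Phi c" by blast
    define beta where "beta = (\<lambda>T\<in>Ts. (\<Sum>i\<in>Idx. c i * B i T) mod int p)"
    have "beta \<in> C2" using p by (auto simp: beta_def C2_def)
    moreover have "Phi c x = Psi beta x" for x
    proof (cases "x \<in> D")
      case True
      have "(\<Sum>i\<in>Idx. c i * F i x) = (\<Sum>i\<in>Idx. c i * (\<Sum>T\<in>Ts. B i T * m T x))"
        using B True by simp
      also have "\<dots> = (\<Sum>T\<in>Ts. (\<Sum>i\<in>Idx. c i * B i T) * m T x)"
        by (simp only: sum_distrib_left sum_distrib_right mult.assoc, rule sum.swap)
      also have "\<dots> mod int p = (\<Sum>T\<in>Ts. ((\<Sum>i\<in>Idx. c i * B i T) * m T x) mod int p) mod int p"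
        by (rule mod_sum_eq[symmetric])
      also have "\<dots> = (\<Sum>T\<in>Ts. (beta T * m T x) mod int p) mod int p"
        unfolding beta_def by (rule arg_cong[where f="\<lambda>z. z mod int p"], rule sum.cong)
          (simp_all only: restrict_apply' mod_mult_left_eq)
      also have "\<dots> = (\<Sum>T\<in>Ts. beta T * m T x) mod int p"
        by (rule mod_sum_eq)
      finally show ?thesis using True by (simp add: Phi_def Psi_def)
    qed (simp add: Phi_def Psi_def)
    ultimately show "y \<in> Psi ` C2" using y by blast
  qed
  moreover have "finite C2" by (simp add: C2_def fin finite_PiE)
  ultimately have "card C1 \<le> card C2"
    using card_mono[of "Psi ` C2" "Phi ` C1"] card_image_le[of C2 Psi] by (simp add: card_image)
  then have "p ^ card Idx \<le> p ^ card Ts" by (simp add: C1_def C2_def card_PiE fin)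
  then show ?thesis using power_le_imp_le_exp[OF p] by blast
qed

lemma dvd_of_dvd_sums_below:
  fixes R :: "'a set \<Rightarrow> int"
  assumes "finite U" "\<forall>S\<in>U. finite S" "\<forall>S\<in>U. d dvd (\<Sum>T\<in>{T\<in>U. T \<subseteq> S}. R T)"
  shows "\<forall>S\<in>U. d dvd R S"
proof
  fix S assume "S \<in> U"
  then show "d dvd R S"
  proof (induction "card S" arbitrary: S rule: less_induct)
    case less
    have "(\<Sum>T\<in>{T\<in>U. T \<subseteq> S}. R T) = R S + (\<Sum>T\<in>{T\<in>U. T \<subseteq> S} - {S}. R T)"
      using less.prems assms(1) by (intro sum.remove) auto
    moreover have "d dvd (\<Sum>T\<in>{T\<in>U. T \<subseteq> S}. R T)" using assms(3) less.prems by blast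
    moreover have "d dvd (\<Sum>T\<in>{T\<in>U. T \<subseteq> S} - {S}. R T)"
    proof (rule dvd_sum)
      fix T assume "T \<in> {T\<in>U. T \<subseteq> S} - {S}"
      then have "T \<in> U" "card T < card S"
        using less.prems assms(2) psubset_card_mono by auto
      then show "d dvd R T" using less.hyps by blast
    qed
    ultimately show ?case by (simp add: dvd_add_left_iff)
  qed
qed

lemma sum_subcube_by_trace:
  assumes "finite I" "Y \<subseteq> I" "W \<inter> I = {}"
  shows "(\<Sum>Z\<in>Pow Y. \<Sum>J\<in>\<J>. if J \<inter> I = Z \<and> J \<subseteq> Z \<union> W then e J else 0)
       = (\<Sum>J\<in>\<J>. if J \<subseteq> Y \<union> W then e J else (0 :: 'b :: comm_monoid_add))"
proof -
  have "(\<Sum>Z\<in>Pow Y. \<Sum>J\<in>\<J>. if J \<inter> I = Z \<and> J \<subseteq> Z \<union> W then e J else 0)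
      = (\<Sum>J\<in>\<J>. \<Sum>Z\<in>Pow Y. if Z = J \<inter> I then (if J \<subseteq> (J \<inter> I) \<union> W then e J else 0) else 0)"
    by (subst sum.swap) (intro sum.cong refl, auto)
  also have "\<dots> = (\<Sum>J\<in>\<J>. if J \<inter> I \<subseteq> Y \<and> J \<subseteq> (J \<inter> I) \<union> W then e J else 0)"
  proof -
    have "finite (Pow Y)" using assms(1,2) finite_subset by blast
    then show ?thesis by (intro sum.cong refl) (simp only: sum.delta, auto)
  qed
  also have "\<dots> = (\<Sum>J\<in>\<J>. if J \<subseteq> Y \<union> W then e J else 0)"
    using assms(2,3) by (intro sum.cong refl arg_cong[where f="\<lambda>b. if b then _ else _"]) blast
  finally show ?thesis .
qed

(* e I is recovered by Moebius inversion in Y from the sums over the cube [W, I \<union> W], up to the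
   coefficients of proper supersets of I, which are handled first. *)
lemma dvd_coeffs_of_dvd_subcube_sums:
  fixes e :: "'a set \<Rightarrow> int"
  assumes fin: "finite \<J>" "\<And>J. J \<in> \<J> \<Longrightarrow> finite J"
    and cube: "\<And>I. I \<in> \<J> \<Longrightarrow>
      \<exists>W. W \<inter> I = {} \<and> (\<forall>Y\<subseteq>I. d dvd (\<Sum>J\<in>\<J>. if J \<subseteq> Y \<union> W then e J else 0))"
    and "I \<in> \<J>"
  shows "d dvd e I"
  using assms(4)
proof (induction "card {J\<in>\<J>. I \<subset> J}" arbitrary: I rule: less_induct)
  case less
  obtain W where W: "W \<inter> I = {}"
    and sums: "\<And>Y. Y \<subseteq> I \<Longrightarrow> d dvd (\<Sum>J\<in>\<J>. if J \<subseteq> Y \<union> W then e J else 0)"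
    using cube[OF less.prems] by blast
  have fI: "finite I" using fin(2) less.prems .
  define R where "R Z = (\<Sum>J\<in>\<J>. if J \<inter> I = Z \<and> J \<subseteq> Z \<union> W then e J else 0)" for Z
  have "\<forall>Z\<in>Pow I. d dvd R Z"
  proof (rule dvd_of_dvd_sums_below)
    show "\<forall>Y\<in>Pow I. d dvd (\<Sum>Z\<in>{Z\<in>Pow I. Z \<subseteq> Y}. R Z)"
    proof
      fix Y assume "Y \<in> Pow I"
      then have Y: "Y \<subseteq> I" and "{Z\<in>Pow I. Z \<subseteq> Y} = Pow Y" by auto
      then have "(\<Sum>Z\<in>{Z\<in>Pow I. Z \<subseteq> Y}. R Z) = (\<Sum>J\<in>\<J>. if J \<subseteq> Y \<union> W then e J else 0)"
        unfolding R_def by (simp only: sum_subcube_by_trace[OF fI Y W])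
      then show "d dvd (\<Sum>Z\<in>{Z\<in>Pow I. Z \<subseteq> Y}. R Z)" using sums[OF Y] by simp
    qed
  qed (use fI in \<open>auto intro: finite_subset\<close>)
  then have "d dvd R I" by blast
  moreover have "R I = e I + (\<Sum>J\<in>\<J> - {I}. if I \<subseteq> J \<and> J \<subseteq> I \<union> W then e J else 0)"
    unfolding R_def sum.remove[OF fin(1) less.prems] by (simp add: Int_absorb1 inf.absorb_iff2)
  moreover have "d dvd (\<Sum>J\<in>\<J> - {I}. if I \<subseteq> J \<and> J \<subseteq> I \<union> W then e J else 0)"
  proof (rule dvd_sum)
    fix J assume J: "J \<in> \<J> - {I}"
    show "d dvd (if I \<subseteq> J \<and> J \<subseteq> I \<union> W then e J else 0)"
    proof (cases "I \<subseteq> J")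
      case True
      with J have "{J'\<in>\<J>. J \<subset> J'} \<subset> {J'\<in>\<J>. I \<subset> J'}" by auto
      then have "card {J'\<in>\<J>. J \<subset> J'} < card {J'\<in>\<J>. I \<subset> J'}"
        using fin(1) by (intro psubset_card_mono) auto
      then show ?thesis using less.hyps J by auto
    qed simp
  qed
  ultimately show ?case by (simp add: dvd_add_left_iff)
qed

lemma qpoly_eq: "finite S \<Longrightarrow> qpoly n S X = (if n \<notin> X \<and> S \<subseteq> X then 1 else 0)"
  by (simp add: qpoly_def prod_xv) (simp add: xv_def)

lemma gIpoly_eq: "finite I \<Longrightarrow> gIpoly p n K I X = (if I \<subseteq> X then gpoly p n K X else 0)"
  by (simp add: gIpoly_def prod_xv)

lemma gpoly_insert_last: "gpoly p n K (insert n X) = gpoly p n K X"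
  unfolding gpoly_def xv_def by (intro prod.cong refl arg_cong2[where f="(-)"] sum.cong) auto

lemma fpoly_insert: "i \<notin> A \<Longrightarrow> fpoly L A (insert i X) = fpoly L A X"
  unfolding fpoly_def dotv_def xv_def by (intro prod.cong refl arg_cong2[where f="(-)"] sum.cong) auto

lemma prime_dvd_gpoly_iff:
  assumes "prime p" "finite K"
  shows "int p dvd gpoly p n K X \<longleftrightarrow>
    (\<exists>h \<in> int ` K \<union> (\<lambda>k. int k - 1) ` K. int p dvd (\<Sum>i\<in>{1..n-1}. xv X i) - h)"
proof -
  have "int p dvd t - h mod int p \<longleftrightarrow> int p dvd t - h" for t h
    by (simp flip: mod_eq_dvd_iff)
  moreover have "prime (int p)" using assms(1) by simp
  ultimately show ?thesis
    unfolding gpoly_def using assms(2) by (simp add: prime_dvd_prod_iff)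
qed

lemma low_degree_fpoly: "A \<subseteq> {1..n} \<Longrightarrow> finite L \<Longrightarrow> low_degree n (card L) (fpoly L A)"
  unfolding fpoly_def[abs_def] dotv_def by (intro low_degree_prod low_degree_linear)

lemma low_degree_qpoly:
  assumes "S \<subseteq> {1..n}" "1 \<le> n" shows "low_degree n (card S + 1) (qpoly n S)"
proof -
  have "low_degree n 1 (\<lambda>X. 1)" by (rule low_degree_mono[OF low_degree_const]) simp
  then have "low_degree n 1 (\<lambda>X. 1 + (-1) * xv X n)"
    using assms(2) by (intro low_degree_add low_degree_scale low_degree_xv) auto
  moreover have "low_degree n (card S) (\<lambda>X. \<Prod>i\<in>S. xv X i)"
    using assms(1) by (intro low_degree_prod low_degree_xv) (auto intro: finite_subset)
  ultimately show ?thesis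
    unfolding qpoly_def[abs_def] using low_degree_mult by fastforce
qed

lemma low_degree_gpoly: "finite K \<Longrightarrow> low_degree n (2 * card K) (gpoly p n K)"
proof -
  assume fK: "finite K"
  let ?H = "(\<lambda>h. h mod int p) ` (int ` K \<union> (\<lambda>k. int k - 1) ` K)"
  have "card ?H \<le> card (int ` K) + card ((\<lambda>k. int k - 1) ` K)"
    using fK by (metis card_Un_le card_image_le finite_Un finite_imageI order_trans)
  also have "\<dots> \<le> 2 * card K" using fK card_image_le by (metis add_mono mult_2)
  finally have "card ?H \<le> 2 * card K" .
  moreover have "low_degree n (card ?H) (gpoly p n K)"
    unfolding gpoly_def[abs_def] using fK by (intro low_degree_prod low_degree_linear) auto
  ultimately show ?thesis using low_degree_mono by blast
qed

lemma low_degree_gIpoly: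
  "finite K \<Longrightarrow> I \<subseteq> {1..n} \<Longrightarrow> low_degree n (2 * card K + card I) (gIpoly p n K I)"
  unfolding gIpoly_def[abs_def]
  by (intro low_degree_mult low_degree_gpoly low_degree_prod low_degree_xv) (auto intro: finite_subset)

section \<open>Families with prescribed sizes and intersections mod p\<close>

locale mod_p_intersecting_family =
  fixes p n :: nat and K L :: "nat set" and \<A> :: "nat set set"
  assumes prime: "prime p"
    and K_less: "K \<subseteq> {0..<p}" and L_less: "L \<subseteq> {0..<p}" and disjoint: "K \<inter> L = {}"
    and K_nonempty: "K \<noteq> {}"
    and family: "\<forall>A\<in>\<A>. A \<subseteq> {1..n}"
    and card_mod: "\<forall>A\<in>\<A>. card A mod p \<in> K"
    and inter_mod: "\<forall>A\<in>\<A>. \<forall>B\<in>\<A>. A \<noteq> B \<longrightarrow> card (A \<inter> B) mod p \<in> L"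
    and n_ge: "n \<ge> card L + Max K"
    and window: "int n < int p + int (Min K) \<or>
       (int (card L) - 2 * int (card K) + 1) + int (Max K) < int p + int (Min K) - 1"
begin

definition q_sets :: "nat set set" where
  "q_sets = {S. S \<subseteq> {1..n - 1} \<and> card S < card L}"

definition g_sets :: "nat set set" where
  "g_sets = {I. I \<subseteq> {1..n - 1} \<and> card I + 2 * card K \<le> card L}"

definition index :: "(nat set + nat set + nat set) set" where
  "index = Inl ` \<A> \<union> Inr ` Inl ` q_sets \<union> Inr ` Inr ` g_sets"

definition combination ::
    "(nat set \<Rightarrow> int) \<Rightarrow> (nat set \<Rightarrow> int) \<Rightarrow> (nat set \<Rightarrow> int) \<Rightarrow> nat set \<Rightarrow> int" where
  "combination a b c X = (\<Sum>A\<in>\<A>. a A * fpoly L A X) + (\<Sum>S\<in>q_sets. b S * qpoly n S X)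
     + (\<Sum>I\<in>g_sets. c I * gIpoly p n K I X)"

lemma prime_int: "prime (int p)"
  using prime by simp

lemma finite_K: "finite K"
  using K_less by (rule finite_subset) simp

lemma finite_L: "finite L"
  using L_less by (rule finite_subset) simp

lemma finite_family: "finite \<A>"
  by (rule finite_subset[of _ "Pow {1..n}"]) (use family in auto)

lemma finite_member: "A \<in> \<A> \<Longrightarrow> finite A"
  using family finite_subset[of A "{1..n}"] by simp

lemma finite_q_sets: "finite q_sets"
  by (rule finite_subset[of _ "Pow {1..n - 1}"]) (auto simp: q_sets_def)

lemma finite_g_sets: "finite g_sets"
  by (rule finite_subset[of _ "Pow {1..n - 1}"]) (auto simp: g_sets_def)

lemma finite_g_set: "I \<in> g_sets \<Longrightarrow> finite I"
  unfolding g_sets_def using finite_subset[of I "{1..n - 1}"] by simp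

lemma fpoly_off_diagonal:
  assumes "A \<in> \<A>" "B \<in> \<A>" "A \<noteq> B" shows "int p dvd fpoly L B A"
proof -
  let ?l = "card (B \<inter> A) mod p"
  have l: "?l \<in> L" using inter_mod assms by blast
  have "int p dvd dotv B A - int ?l"
    using finite_member[OF assms(2)] prime_gt_0_nat[OF prime]
    by (simp add: dotv_def sum_xv dvd_diff_nat_iff_mod_eq)
  then show ?thesis
    unfolding fpoly_def by (rule dvd_trans[OF _ dvd_prodI[OF finite_L l]])
qed

lemma fpoly_diagonal: "A \<in> \<A> \<Longrightarrow> \<not> int p dvd fpoly L A A"
proof
  assume A: "A \<in> \<A>" and "int p dvd fpoly L A A"
  then have "int p dvd (\<Prod>l\<in>L. int (card A) - int l)"
    using finite_member[OF A] by (simp add: fpoly_def dotv_def sum_xv)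
  then have "\<exists>l\<in>L. int p dvd int (card A) - int l"
    by (simp add: prime_dvd_prod_iff[OF finite_L prime_int])
  then obtain l where l: "l \<in> L" "int p dvd int (card A) - int l" by blast
  moreover have "l < p" using L_less l(1) by auto
  ultimately have "card A mod p = l" by (simp add: dvd_diff_nat_iff_mod_eq)
  then show False using card_mod disjoint A l(1) by blast
qed

lemma gpoly_vanishes_on_family:
  assumes A: "A \<in> \<A>" shows "int p dvd gpoly p n K A"
proof -
  let ?k = "card A mod p"
  have k: "?k \<in> K" using card_mod A by blast
  have dvd: "int p dvd int (card A) - int ?k"
    using prime_gt_0_nat[OF prime] by (simp add: dvd_diff_nat_iff_mod_eq)
  have fA: "finite A" using finite_member[OF A] .
  have "{1..n-1} \<inter> A = A - {n}" using family A by fastforce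
  then have "(\<Sum>i\<in>{1..n-1}. xv A i) = int (card A) - (if n \<in> A then 1 else 0)"
    using fA card.remove[OF fA, of n] by (cases "n \<in> A") (simp_all add: sum_xv)
  then have "int p dvd (\<Sum>i\<in>{1..n-1}. xv A i) - (if n \<in> A then int ?k - 1 else int ?k)"
    using dvd by simp
  moreover have "(if n \<in> A then int ?k - 1 else int ?k) \<in> int ` K \<union> (\<lambda>k. int k - 1) ` K"
    using k by auto
  ultimately show ?thesis
    using prime_dvd_gpoly_iff[OF prime finite_K] by blast
qed

lemma gpoly_not_dvd:
  assumes X: "X \<subseteq> {1..n - 1}" and lower: "Max K < card X" and upper: "card X + 1 < p + Min K"
  shows "\<not> int p dvd gpoly p n K X"
proof
  assume "int p dvd gpoly p n K X"
  moreover have "(\<Sum>i\<in>{1..n-1}. xv X i) = int (card X)"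
    using X by (simp add: sum_xv Int_absorb1)
  ultimately obtain k h where k: "k \<in> K" "h = int k \<or> h = int k - 1" and "int p dvd int (card X) - h"
    using prime_dvd_gpoly_iff[OF prime finite_K] by auto
  moreover have "0 < int (card X) - h" "int (card X) - h < int p"
    using k lower upper Max_ge[OF finite_K k(1)] Min_le[OF finite_K k(1)] by linarith+
  ultimately show False using zdvd_imp_le by fastforce
qed

lemma sum_index_eq_combination:
  "(\<Sum>i\<in>index. c i * allpolys p n K L i X)
     = combination (\<lambda>A. c (Inl A)) (\<lambda>S. c (Inr (Inl S))) (\<lambda>I. c (Inr (Inr I))) X"
proof -
  have d1: "(Inl ` \<A> \<union> Inr ` Inl ` q_sets) \<inter> Inr ` Inr ` g_sets = {}"
    and d2: "Inl ` \<A> \<inter> Inr ` Inl ` q_sets = {}"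
    by auto
  have "(\<Sum>i\<in>index. c i * allpolys p n K L i X)
      = (\<Sum>i\<in>Inl ` \<A>. c i * allpolys p n K L i X) + (\<Sum>i\<in>Inr ` Inl ` q_sets. c i * allpolys p n K L i X)
        + (\<Sum>i\<in>Inr ` Inr ` g_sets. c i * allpolys p n K L i X)"
    unfolding index_def using finite_family finite_q_sets finite_g_sets
    by (simp add: sum.union_disjoint[OF _ _ d1] sum.union_disjoint[OF _ _ d2])
  also have "\<dots> = combination (\<lambda>A. c (Inl A)) (\<lambda>S. c (Inr (Inl S))) (\<lambda>I. c (Inr (Inr I))) X"
    unfolding combination_def by (simp add: sum.reindex inj_on_def allpolys_def)
  finally show ?thesis .
qed

context
  fixes a b c :: "nat set \<Rightarrow> int"
  assumes vanishing: "\<And>X. X \<subseteq> {1..n} \<Longrightarrow> int p dvd combination a b c X"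
begin

lemma f_coeff_dvd_if_q_part_dvd:
  assumes A: "A \<in> \<A>" and q_part: "int p dvd (\<Sum>S\<in>q_sets. b S * qpoly n S A)"
  shows "int p dvd a A"
proof -
  have "int p dvd (\<Sum>B\<in>\<A> - {A}. a B * fpoly L B A)"
    using fpoly_off_diagonal[OF A] by (auto intro: dvd_sum dvd_mult)
  moreover have "int p dvd (\<Sum>I\<in>g_sets. c I * gIpoly p n K I A)"
    using gpoly_vanishes_on_family[OF A] by (auto intro!: dvd_sum simp: gIpoly_eq finite_g_set)
  moreover have "int p dvd combination a b c A" using vanishing family A by blast
  moreover have "combination a b c A = a A * fpoly L A A + (\<Sum>B\<in>\<A> - {A}. a B * fpoly L B A)
      + (\<Sum>S\<in>q_sets. b S * qpoly n S A) + (\<Sum>I\<in>g_sets. c I * gIpoly p n K I A)"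
    unfolding combination_def by (simp add: sum.remove[OF finite_family A])
  ultimately have "int p dvd a A * fpoly L A A"
    using q_part by (simp add: dvd_add_left_iff)
  then show ?thesis using fpoly_diagonal[OF A] prime_int by (simp add: prime_dvd_mult_iff)
qed

lemma f_coeff_dvd_if_last: "A \<in> \<A> \<Longrightarrow> n \<in> A \<Longrightarrow> int p dvd a A"
  by (rule f_coeff_dvd_if_q_part_dvd)
    (simp_all add: qpoly_eq q_sets_def finite_subset[of _ "{1..n - 1}"])

(* Comparing the points S and S \<union> {n}: g and the f_A with n \<notin> A do not depend on x_n, and
   the f_A with n \<in> A have vanishing coefficients. *)
lemma q_coeff_sum_below_dvd:
  assumes S: "S \<in> q_sets" shows "int p dvd (\<Sum>T\<in>{T\<in>q_sets. T \<subseteq> S}. b T)"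
proof -
  have S_sub: "S \<subseteq> {1..n - 1}" and "card S < card L" using S by (auto simp: q_sets_def)
  then have n: "1 \<le> n" using n_ge by linarith
  have last: "n \<notin> {1..n - 1}" by auto
  then have nS: "n \<notin> S" using S_sub by blast
  have f_part: "int p dvd (\<Sum>A\<in>\<A>. a A * (fpoly L A S - fpoly L A (insert n S)))"
  proof (rule dvd_sum)
    fix A assume A: "A \<in> \<A>"
    show "int p dvd a A * (fpoly L A S - fpoly L A (insert n S))"
      by (cases "n \<in> A") (simp_all add: fpoly_insert f_coeff_dvd_if_last[OF A] dvd_mult2)
  qed
  have q_part: "(\<Sum>T\<in>q_sets. b T * (qpoly n T S - qpoly n T (insert n S))) = (\<Sum>T\<in>{T\<in>q_sets. T \<subseteq> S}. b T)"
  proof -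
    have "(\<Sum>T\<in>q_sets. b T * (qpoly n T S - qpoly n T (insert n S))) = (\<Sum>T\<in>q_sets. if T \<subseteq> S then b T else 0)"
      using nS by (intro sum.cong refl) (auto simp: qpoly_eq q_sets_def finite_subset[of _ "{1..n - 1}"])
    then show ?thesis by (simp add: sum.inter_filter finite_q_sets)
  qed
  have g_part: "(\<Sum>I\<in>g_sets. c I * (gIpoly p n K I S - gIpoly p n K I (insert n S))) = 0"
  proof (rule sum.neutral, rule ballI)
    fix I assume I: "I \<in> g_sets"
    then have "I \<subseteq> insert n S \<longleftrightarrow> I \<subseteq> S" using last by (auto simp: g_sets_def)
    then show "c I * (gIpoly p n K I S - gIpoly p n K I (insert n S)) = 0"
      using finite_g_set[OF I] by (simp add: gIpoly_eq gpoly_insert_last)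
  qed
  have "int p dvd combination a b c S - combination a b c (insert n S)"
  proof (intro dvd_diff vanishing)
    show "S \<subseteq> {1..n}" "insert n S \<subseteq> {1..n}" using S_sub n by (auto simp: subset_iff)
  qed
  also have "combination a b c S - combination a b c (insert n S)
      = (\<Sum>A\<in>\<A>. a A * (fpoly L A S - fpoly L A (insert n S)))
        + (\<Sum>T\<in>q_sets. b T * (qpoly n T S - qpoly n T (insert n S)))
        + (\<Sum>I\<in>g_sets. c I * (gIpoly p n K I S - gIpoly p n K I (insert n S)))"
    unfolding combination_def right_diff_distrib sum_subtractf by simp
  finally show ?thesis using f_part q_part g_part by (simp add: dvd_add_right_iff)
qed

lemma q_coeff_dvd: "S \<in> q_sets \<Longrightarrow> int p dvd b S"
  using dvd_of_dvd_sums_below[OF finite_q_sets] q_coeff_sum_below_dvd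
  by (auto simp: q_sets_def finite_subset[of _ "{1..n - 1}"])

lemma f_coeff_dvd: "A \<in> \<A> \<Longrightarrow> int p dvd a A"
  using q_coeff_dvd by (auto intro: f_coeff_dvd_if_q_part_dvd dvd_sum dvd_mult2)

lemma g_coeff_sum_dvd:
  assumes X: "X \<subseteq> {1..n - 1}" and "Max K < card X" and "card X + 1 < p + Min K"
  shows "int p dvd (\<Sum>I\<in>g_sets. if I \<subseteq> X then c I else 0)"
proof -
  have "int p dvd (\<Sum>A\<in>\<A>. a A * fpoly L A X)" "int p dvd (\<Sum>S\<in>q_sets. b S * qpoly n S X)"
    using f_coeff_dvd q_coeff_dvd by (auto intro: dvd_sum dvd_mult2)
  moreover have "int p dvd combination a b c X"
    using vanishing X by (meson atLeastatMost_subset_iff diff_le_self order.refl order_trans)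
  ultimately have "int p dvd (\<Sum>I\<in>g_sets. c I * gIpoly p n K I X)"
    unfolding combination_def by (simp add: dvd_add_right_iff)
  also have "(\<Sum>I\<in>g_sets. c I * gIpoly p n K I X) = gpoly p n K X * (\<Sum>I\<in>g_sets. if I \<subseteq> X then c I else 0)"
    unfolding sum_distrib_left by (intro sum.cong refl) (simp add: gIpoly_eq finite_g_set)
  finally show ?thesis using gpoly_not_dvd[OF assms] prime_int by (simp add: prime_dvd_mult_iff)
qed

lemma g_coeff_dvd:
  assumes "J \<in> g_sets" shows "int p dvd c J"
proof (rule dvd_coeffs_of_dvd_subcube_sums[OF finite_g_sets finite_g_set _ assms])
  fix I assume I: "I \<in> g_sets"
  then have I_sub: "I \<subseteq> {1..n - 1}" and card_I: "card I + 2 * card K \<le> card L"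
    by (auto simp: g_sets_def)
  have "card K \<ge> 1" using finite_K K_nonempty by (simp add: Suc_le_eq card_gt_0_iff)
  then have "Max K + 1 \<le> card ({1..n - 1} - I)"
    using card_I n_ge finite_g_set[OF I] I_sub by (simp add: card_Diff_subset)
  \<comment> \<open>for Y \<subseteq> I the weight of Y \<union> W lies in the range where g does not vanish\<close>
  then obtain W where W: "W \<subseteq> {1..n - 1} - I" "card W = Max K + 1"
    by (meson obtain_subset_with_card_n)
  have "int p dvd (\<Sum>J\<in>g_sets. if J \<subseteq> Y \<union> W then c J else 0)" if Y: "Y \<subseteq> I" for Y
  proof (rule g_coeff_sum_dvd)
    have "finite W" using W(1) finite_subset by auto
    moreover have "finite Y" using Y finite_g_set[OF I] finite_subset by auto
    moreover have "Y \<inter> W = {}" using Y W(1) by auto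
    ultimately have card: "card (Y \<union> W) = card Y + Max K + 1"
      using W(2) by (simp add: card_Un_disjoint)
    show "Y \<union> W \<subseteq> {1..n - 1}" using Y I_sub W(1) by auto
    then have "card (Y \<union> W) \<le> n - 1" using card_mono[of "{1..n - 1}"] by fastforce
    moreover have "card Y \<le> card I" using Y finite_g_set[OF I] by (simp add: card_mono)
    ultimately show "card (Y \<union> W) + 1 < p + Min K"
      using window card card_I by linarith
    show "Max K < card (Y \<union> W)" using card by simp
  qed
  then show "\<exists>W. W \<inter> I = {} \<and> (\<forall>Y\<subseteq>I. int p dvd (\<Sum>J\<in>g_sets. if J \<subseteq> Y \<union> W then c J else 0))"
    using W(1) by blast
qed

end

lemma lin_indep: "lin_indep_mod p index (allpolys p n K L) {X. X \<subseteq> {1..n}}"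
  unfolding lin_indep_mod_def
proof (intro allI impI ballI)
  fix c :: "nat set + nat set + nat set \<Rightarrow> int" and i
  assume "\<forall>X\<in>{X. X \<subseteq> {1..n}}. (\<Sum>i\<in>index. c i * allpolys p n K L i X) mod int p = 0"
  then have vanishing: "int p dvd combination (\<lambda>A. c (Inl A)) (\<lambda>S. c (Inr (Inl S))) (\<lambda>I. c (Inr (Inr I))) X"
    if "X \<subseteq> {1..n}" for X
    using that by (simp add: sum_index_eq_combination dvd_eq_mod_eq_0)
  assume "i \<in> index"
  then have "int p dvd c i"
    unfolding index_def
    using f_coeff_dvd[OF vanishing] q_coeff_dvd[OF vanishing] g_coeff_dvd[OF vanishing] by blast
  then show "c i mod int p = 0" by simp
qed

lemma low_degree_allpolys:
  assumes "i \<in> index" shows "low_degree n (card L) (allpolys p n K L i)"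
proof -
  consider (f) A where "A \<in> \<A>" "i = Inl A" | (q) S where "S \<in> q_sets" "i = Inr (Inl S)"
    | (g) I where "I \<in> g_sets" "i = Inr (Inr I)"
    using assms unfolding index_def by blast
  then show ?thesis
  proof cases
    case f
    then show ?thesis using family low_degree_fpoly finite_L by (simp add: allpolys_def)
  next
    case q
    then have S_sub: "S \<subseteq> {1..n}" and card_S: "card S + 1 \<le> card L"
      by (auto simp: q_sets_def subset_iff)
    then have "1 \<le> n" using n_ge by linarith
    then show ?thesis
      using low_degree_mono[OF low_degree_qpoly[OF S_sub] card_S] q by (simp add: allpolys_def)
  next
    case g
    then have I_sub: "I \<subseteq> {1..n}" and card_I: "2 * card K + card I \<le> card L"
      by (auto simp: g_sets_def subset_iff)
    then show ?thesis
      using low_degree_mono[OF low_degree_gIpoly[OF finite_K I_sub] card_I] g by (simp add: allpolys_def)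
  qed
qed

lemma card_index: "card index = card \<A> + card q_sets + card g_sets"
proof -
  have d1: "(Inl ` \<A> \<union> Inr ` Inl ` q_sets) \<inter> Inr ` Inr ` g_sets = {}"
    and d2: "Inl ` \<A> \<inter> Inr ` Inl ` q_sets = {}"
    by auto
  with finite_family finite_q_sets finite_g_sets show ?thesis
    unfolding index_def
    by (simp add: card_Un_disjoint[OF _ _ d1] card_Un_disjoint[OF _ _ d2] card_image inj_on_def)
qed

lemma card_family_le:
  "card \<A> \<le> (\<Sum>t\<in>{t. card L < t + 2 * card K \<and> t \<le> card L}. (n - 1) choose t)"
proof -
  let ?R = "{t. card L < t + 2 * card K \<and> t \<le> card L}"
  let ?layers = "{T. T \<subseteq> {1..n - 1} \<and> card T \<in> ?R}"
  have "finite index" using finite_family finite_q_sets finite_g_sets by (simp add: index_def)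
  moreover have "\<forall>i\<in>index. \<exists>b. \<forall>X\<in>{X. X \<subseteq> {1..n}}.
      allpolys p n K L i X = (\<Sum>T\<in>monomials n (card L). b T * (if T \<subseteq> X then 1 else 0))"
    using low_degree_allpolys by (simp add: low_degree_def)
  ultimately have "card index \<le> card (monomials n (card L))"
    by (rule lin_indep_mod_card_le[OF prime_gt_1_nat[OF prime] _ finite_monomials lin_indep])
  also have "\<dots> \<le> card (monomials (n - 1) (card L)) + card q_sets"
    using card_monomials_le by (simp add: q_sets_def)
  also have "card (monomials (n - 1) (card L)) = card g_sets + card ?layers"
  proof -
    have "monomials (n - 1) (card L) = g_sets \<union> ?layers" by (auto simp: monomials_def g_sets_def)
    moreover have "g_sets \<inter> ?layers = {}" by (auto simp: g_sets_def)
    moreover have "finite ?layers" by (rule finite_subset[of _ "Pow {1..n - 1}"]) auto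
    ultimately show ?thesis using finite_g_sets by (simp add: card_Un_disjoint)
  qed
  finally have "card \<A> \<le> card ?layers" by (simp add: card_index)
  also have "\<dots> = (\<Sum>t\<in>?R. (n - 1) choose t)"
    using card_subsets_card_in[of "{1..n - 1}" ?R] finite_subset[of ?R "{..card L}"] by simp
  finally show ?thesis .
qed

end

theorem mainTheorem7:
  fixes p n :: nat and K L :: "nat set" and \<A> :: "nat set set"
  assumes "prime p"
    and "K \<subseteq> {0..<p}" and "L \<subseteq> {0..<p}" and "K \<inter> L = {}" and "K \<noteq> {}"
    and "\<forall>A\<in>\<A>. A \<subseteq> {1..n}"
    and "\<forall>A\<in>\<A>. card A mod p \<in> K"
    and "\<forall>A\<in>\<A>. \<forall>B\<in>\<A>. A \<noteq> B \<longrightarrow> card (A \<inter> B) mod p \<in> L"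
    and "n \<ge> card L + Max K"
    and "int n < int p + int (Min K) \<or>
         (int (card L) - 2 * int (card K) + 1) + int (Max K) < int p + int (Min K) - 1"
  shows "lin_indep_mod p
           (Inl ` \<A>
            \<union> Inr ` Inl ` {S. S \<subseteq> {1..n-1} \<and> int (card S) \<le> int (card L) - 1}
            \<union> Inr ` Inr ` {I. I \<subseteq> {1..n-1} \<and> int (card I) \<le> int (card L) - 2 * int (card K)})
           (allpolys p n K L) {X. X \<subseteq> {1..n}}
       \<and> card \<A> \<le> (\<Sum>t\<in>{t::nat. int (card L) - 2 * int (card K) + 1 \<le> int t \<and> t \<le> card L}.
                      (n - 1) choose t)"
proof -
  interpret mod_p_intersecting_family p n K L \<A>
    by (rule mod_p_intersecting_family.intro[OF assms])
  have "{S. S \<subseteq> {1..n-1} \<and> int (card S) \<le> int (card L) - 1} = q_sets"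
    by (auto simp: q_sets_def)
  moreover have "{I. I \<subseteq> {1..n-1} \<and> int (card I) \<le> int (card L) - 2 * int (card K)} = g_sets"
    by (auto simp: g_sets_def)
  moreover have "{t::nat. int (card L) - 2 * int (card K) + 1 \<le> int t \<and> t \<le> card L}
      = {t. card L < t + 2 * card K \<and> t \<le> card L}"
    by auto
  ultimately show ?thesis
    using lin_indep card_family_le unfolding index_def by simp
qed

end
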